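(* Let $F$ satisfy the structure condition (S) with constants $0<\lambda\le\Lambda$ and bounded continuous $b\ge0$, $c\le0$, and $F(x,t,0,0,0)=0$. Let $u$ be a continuous viscosity subsolution (resp. supersolution) of $F(x,t,u,Du,D^2u)-\partial_tu=0$ in the cylinder $\mathbb{Q}^{t_1,t_2}_{x_0,R}$ and on its upper base $Q^{t_2}_{x_0,R}$. If $u$ attains its maximum (resp. minimum) $M$ over $\mathbb{Q}^{t_1,t_2}_{x_0,R}\cup Q^{t_2}_{x_0,R}$ at the point $(x_0,t_2)$ and $M\ge0$ (resp. $M\le 0$), then $u(x_0,t)=M$ for all $t\in(t_1,t_2)$.
   Context: Structure condition (S): for all $(x,t)$ in the domain, $r,s\in\mathbb{R}$, $p,q\in\mathbb{R}^n$, $M,N\in\mathcal{S}_n$ (symmetric $n\times n$ matrices) with $N\ge 0$, $$\lambda\,\mathrm{Tr}(N)-b(x,t)|p-q|+c(x,t)(r-s)\le F(x,t,r,p,M+N)-F(x,t,s,q,M)\le \Lambda\,\mathrm{Tr}(N)+b(x,t)|p-q|+c(x,t)(r-s).$$ $\mathbb{Q}^{t_1,t_2}_{x_0,R}=\{(x,t):|x-x_0|<R,\ t_1<t<t_2\}$ and $Q^{t_2}_{x_0,R}=\{(x,t_2):|x-x_0|<R\}$ is its upper base. Being a viscosity subsolution on the upper base means the viscosity inequality holds at points with $t=t_2$, tested from the past. *)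

theory Defs
  imports "HOL-Analysis.Analysis"
begin

type_synonym 'n nonlin =
  "real^'n \<Rightarrow> real \<Rightarrow> real \<Rightarrow> real^'n \<Rightarrow> real^'n^'n \<Rightarrow> real"

definition sym_mat :: "real^'n^'n \<Rightarrow> bool" where
  "sym_mat A \<longleftrightarrow> transpose A = A"

definition psd_mat :: "real^'n^'n \<Rightarrow> bool" where
  "psd_mat A \<longleftrightarrow> (\<forall>v. 0 \<le> v \<bullet> (A *v v))"

definition structure_S ::
  "('n::finite) nonlin \<Rightarrow> real \<Rightarrow> real \<Rightarrow> (real^'n \<Rightarrow> real \<Rightarrow> real)
     \<Rightarrow> (real^'n \<Rightarrow> real \<Rightarrow> real) \<Rightarrow> ((real^'n) \<times> real) set \<Rightarrow> bool" where
  "structure_S F lam Lam b c D \<longleftrightarrow>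
    (\<forall>x t r s p q M N. (x,t) \<in> D \<longrightarrow> sym_mat M \<longrightarrow> sym_mat N \<longrightarrow> psd_mat N \<longrightarrow>
       lam * trace N - b x t * norm (p - q) + c x t * (r - s)
         \<le> F x t r p (M + N) - F x t s q M
     \<and> F x t r p (M + N) - F x t s q M
         \<le> Lam * trace N + b x t * norm (p - q) + c x t * (r - s))"

definition cyl :: "real^'n \<Rightarrow> real \<Rightarrow> real \<Rightarrow> real \<Rightarrow> ((real^'n) \<times> real) set" where
  "cyl x0 R t1 t2 = {(x,t). dist x x0 < R \<and> t1 < t \<and> t < t2}"

definition upper_base :: "real^'n \<Rightarrow> real \<Rightarrow> real \<Rightarrow> ((real^'n) \<times> real) set" where
  "upper_base x0 R t2 = {(x,t). dist x x0 < R \<and> t = t2}"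

definition test_fun ::
  "(real^'n \<Rightarrow> real \<Rightarrow> real) \<Rightarrow> (real^'n \<Rightarrow> real \<Rightarrow> real^'n)
     \<Rightarrow> (real^'n \<Rightarrow> real \<Rightarrow> real^'n^'n) \<Rightarrow> (real^'n \<Rightarrow> real \<Rightarrow> real) \<Rightarrow> bool" where
  "test_fun phi Dphi D2phi phit \<longleftrightarrow>
     continuous_on UNIV (\<lambda>(x,t). Dphi x t) \<and>
     continuous_on UNIV (\<lambda>(x,t). D2phi x t) \<and>
     continuous_on UNIV (\<lambda>(x,t). phit x t) \<and>
     (\<forall>x t. ((\<lambda>y. phi y t) has_derivative (\<lambda>h. Dphi x t \<bullet> h)) (at x)) \<and>
     (\<forall>x t. ((\<lambda>y. Dphi y t) has_derivative (\<lambda>h. D2phi x t *v h)) (at x)) \<and>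
     (\<forall>x t. ((\<lambda>s. phi x s) has_real_derivative phit x t) (at t))"

text \<open>u - phi has a local maximum (minimum) at (x,t) relative to D.  For points
  of the upper base this means that only points from the past are compared.\<close>
definition loc_max_rel ::
  "((real^'n) \<times> real) set \<Rightarrow> (real^'n \<Rightarrow> real \<Rightarrow> real) \<Rightarrow> real^'n \<Rightarrow> real \<Rightarrow> bool" where
  "loc_max_rel D w x t \<longleftrightarrow> (\<exists>e>0. \<forall>y s. (y,s) \<in> D \<longrightarrow> dist y x < e \<longrightarrow> \<bar>s - t\<bar> < e
      \<longrightarrow> w y s \<le> w x t)"

definition loc_min_rel ::
  "((real^'n) \<times> real) set \<Rightarrow> (real^'n \<Rightarrow> real \<Rightarrow> real) \<Rightarrow> real^'n \<Rightarrow> real \<Rightarrow> bool" where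
  "loc_min_rel D w x t \<longleftrightarrow> (\<exists>e>0. \<forall>y s. (y,s) \<in> D \<longrightarrow> dist y x < e \<longrightarrow> \<bar>s - t\<bar> < e
      \<longrightarrow> w x t \<le> w y s)"

definition visc_sub ::
  "('n::finite) nonlin \<Rightarrow> ((real^'n) \<times> real) set \<Rightarrow> (real^'n \<Rightarrow> real \<Rightarrow> real) \<Rightarrow> bool" where
  "visc_sub F D u \<longleftrightarrow>
    (\<forall>x t phi Dphi D2phi phit. (x,t) \<in> D \<longrightarrow> test_fun phi Dphi D2phi phit \<longrightarrow>
       loc_max_rel D (\<lambda>y s. u y s - phi y s) x t \<longrightarrow>
       F x t (u x t) (Dphi x t) (D2phi x t) - phit x t \<ge> 0)"

definition visc_super ::
  "('n::finite) nonlin \<Rightarrow> ((real^'n) \<times> real) set \<Rightarrow> (real^'n \<Rightarrow> real \<Rightarrow> real) \<Rightarrow> bool" where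
  "visc_super F D u \<longleftrightarrow>
    (\<forall>x t phi Dphi D2phi phit. (x,t) \<in> D \<longrightarrow> test_fun phi Dphi D2phi phit \<longrightarrow>
       loc_min_rel D (\<lambda>y s. u y s - phi y s) x t \<longrightarrow>
       F x t (u x t) (Dphi x t) (D2phi x t) - phit x t \<le> 0)"

end

theory Submission
  imports Defs
begin

text \<open>Suppose u(x0,t) < M for some t1 < t < t2. By continuity u \<le> M - \<eta> on a small ball
  of radius r around x0 at time t. On the cylinder of radius r over [t,t2] compare u with
  the barrier
    \<phi>(x,s) = M - \<eta> e^{-\<beta>(s-t)} (e^{-\<alpha>|x-x0|^2} - e^{-\<alpha>r^2}),
  which equals M on the lateral boundary and is \<ge> M - \<eta> at time t. For large \<alpha> and
  then \<beta>, the structure condition makes \<phi> a strict classical supersolution wherever u > \<phi>,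
  so u - \<phi> cannot have a positive maximum in the cylinder or on its top; hence u \<le> \<phi>.
  But \<phi>(x0,t2) < M = u(x0,t2). Supersolutions are reduced to subsolutions by
  u \<mapsto> -u, F(x,t,r,p,A) \<mapsto> -F(x,t,-r,-p,-A).\<close>

definition outer_prod :: "real^'n \<Rightarrow> real^'n^'n" where
  "outer_prod y = (\<chi> i j. y$i * y$j)"

lemma outer_prod_mult_vec: "outer_prod y *v h = (y \<bullet> h) *\<^sub>R y"
  by (simp add: outer_prod_def vec_eq_iff matrix_vector_mult_def inner_vec_def
      sum_distrib_left mult_ac)

lemma trace_outer_prod: "trace (outer_prod y) = norm y ^ 2"
  by (simp add: outer_prod_def trace_def power2_norm_eq_inner inner_vec_def)

lemma trace_scaleR: "trace (a *\<^sub>R A) = a * trace (A :: real^'n^'n)"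
  by (simp add: trace_def sum_distrib_left)

lemma matrix_vector_mult_uminus: "(- A) *v h = - (A *v (h :: real^'n))"
  by (simp add: matrix_vector_mult_def vec_eq_iff sum_negf)

lemma sym_mat_outer_prod: "sym_mat (outer_prod y)"
  by (simp add: sym_mat_def outer_prod_def transpose_def vec_eq_iff mult.commute)

lemma sym_mat_mat: "sym_mat (mat a :: real^'n^'n)"
  by (simp add: sym_mat_def transpose_mat)

lemma sym_mat_add: "sym_mat A \<Longrightarrow> sym_mat B \<Longrightarrow> sym_mat (A + B :: real^'n^'n)"
  and sym_mat_diff: "sym_mat A \<Longrightarrow> sym_mat B \<Longrightarrow> sym_mat (A - B :: real^'n^'n)"
  and sym_mat_uminus: "sym_mat A \<Longrightarrow> sym_mat (- A :: real^'n^'n)"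
  and sym_mat_scaleR: "sym_mat A \<Longrightarrow> sym_mat (a *\<^sub>R A :: real^'n^'n)"
  by (simp_all add: sym_mat_def transpose_def vec_eq_iff)

lemma psd_mat_outer_prod: "psd_mat (outer_prod y)"
  by (simp add: psd_mat_def outer_prod_mult_vec inner_commute)

lemma psd_mat_mat_1: "psd_mat (mat 1 :: real^'n^'n)"
  by (simp add: psd_mat_def)

lemma psd_mat_scaleR: "0 \<le> a \<Longrightarrow> psd_mat A \<Longrightarrow> psd_mat (a *\<^sub>R A :: real^'n^'n)"
  by (simp add: psd_mat_def flip: scaleR_matrix_vector_assoc)

section \<open>Consequences of the structure condition\<close>

lemma structure_S_upper_bound:
  fixes F :: "('n::finite) nonlin"
  assumes S: "structure_S F lam Lam b c D" and xt: "(x,t) \<in> D" and F0: "F x t 0 0 0 = 0"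
    and A: "sym_mat A" and N: "sym_mat N" "psd_mat N" and AN: "psd_mat (A + N)"
  shows "F x t r p A \<le> Lam * trace (A + N) - lam * trace N + b x t * norm p + c x t * r"
proof -
  have "lam * trace N - b x t * norm (0 - p) + c x t * (0 - r) \<le> F x t 0 0 (A + N) - F x t r p A"
    using S xt A N unfolding structure_S_def by blast
  moreover have "F x t 0 0 (0 + (A + N)) - F x t 0 0 0
      \<le> Lam * trace (A + N) + b x t * norm (0 - 0 :: real^'n) + c x t * (0 - 0)"
    using S xt sym_mat_mat[of 0, unfolded mat_0] sym_mat_add[OF A N(1)] AN
    unfolding structure_S_def by blast
  ultimately show ?thesis using F0 by simp
qed

definition neg_nonlin :: "('n::finite) nonlin \<Rightarrow> 'n nonlin" where
  "neg_nonlin F = (\<lambda>x t r p A. - F x t (-r) (-p) (-A))"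

lemma structure_S_neg_nonlin:
  fixes F :: "('n::finite) nonlin"
  assumes "structure_S F lam Lam b c D"
  shows "structure_S (neg_nonlin F) lam Lam b c D"
  unfolding structure_S_def
proof (intro allI impI)
  fix x t r s p q and A N :: "real^'n^'n"
  assume xt: "(x,t) \<in> D" and "sym_mat A" "sym_mat N" "psd_mat N"
  then have "sym_mat (- A - N)" by (simp add: sym_mat_diff sym_mat_uminus)
  with assms xt \<open>sym_mat N\<close> \<open>psd_mat N\<close>
  have "lam * trace N - b x t * norm (- q - - p) + c x t * (- s - - r)
          \<le> F x t (-s) (-q) ((- A - N) + N) - F x t (-r) (-p) (- A - N)
      \<and> F x t (-s) (-q) ((- A - N) + N) - F x t (-r) (-p) (- A - N)
          \<le> Lam * trace N + b x t * norm (- q - - p) + c x t * (- s - - r)"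
    unfolding structure_S_def by blast
  then show "lam * trace N - b x t * norm (p - q) + c x t * (r - s)
          \<le> neg_nonlin F x t r p (A + N) - neg_nonlin F x t s q A
      \<and> neg_nonlin F x t r p (A + N) - neg_nonlin F x t s q A
          \<le> Lam * trace N + b x t * norm (p - q) + c x t * (r - s)"
    by (simp add: neg_nonlin_def norm_minus_commute algebra_simps)
qed

lemma test_fun_uminus:
  assumes test: "test_fun phi Dphi D2phi phit"
  shows "test_fun (\<lambda>x t. - phi x t) (\<lambda>x t. - Dphi x t) (\<lambda>x t. - D2phi x t) (\<lambda>x t. - phit x t)"
proof -
  have grad: "((\<lambda>y. - phi y t) has_derivative (\<lambda>h. - Dphi x t \<bullet> h)) (at x)"
    and hess: "((\<lambda>y. - Dphi y t) has_derivative (\<lambda>h. - D2phi x t *v h)) (at x)" for x t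
    using has_derivative_minus[of "\<lambda>y. phi y t" "\<lambda>h. Dphi x t \<bullet> h" "at x"]
      has_derivative_minus[of "\<lambda>y. Dphi y t" "\<lambda>h. D2phi x t *v h" "at x"] test
    unfolding test_fun_def by (simp_all add: matrix_vector_mult_uminus)
  with test show ?thesis
    unfolding test_fun_def
    by (auto simp: case_prod_unfold intro!: continuous_on_minus DERIV_minus grad hess)
qed

lemma visc_super_imp_visc_sub_neg:
  assumes "visc_super F D u"
  shows "visc_sub (neg_nonlin F) D (\<lambda>x t. - u x t)"
  unfolding visc_sub_def
proof (intro allI impI)
  fix x t phi Dphi D2phi phit
  assume xt: "(x,t) \<in> D" and test: "test_fun phi Dphi D2phi phit"
    and max: "loc_max_rel D (\<lambda>y s. - u y s - phi y s) x t"
  have "loc_min_rel D (\<lambda>y s. u y s - - phi y s) x t"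
    using max unfolding loc_max_rel_def loc_min_rel_def by (smt (verit))
  then have "F x t (u x t) (- Dphi x t) (- D2phi x t) - - phit x t \<le> 0"
    using assms xt test_fun_uminus[OF test] unfolding visc_super_def by blast
  then show "0 \<le> neg_nonlin F x t (- u x t) (Dphi x t) (D2phi x t) - phit x t"
    by (simp add: neg_nonlin_def)
qed

section \<open>The barrier\<close>

definition barrier ::
  "real \<Rightarrow> real \<Rightarrow> real \<Rightarrow> real \<Rightarrow> real \<Rightarrow> real^'n \<Rightarrow> real \<Rightarrow> real^'n \<Rightarrow> real \<Rightarrow> real" where
  "barrier M \<eta> \<beta> \<alpha> r x0 ts x t =
     M - \<eta> * exp (-\<beta>*(t-ts)) * (exp (-\<alpha> * norm (x-x0)^2) - exp (-\<alpha>*r^2))"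

definition barrier_weight ::
  "real \<Rightarrow> real \<Rightarrow> real \<Rightarrow> real^'n \<Rightarrow> real \<Rightarrow> real^'n \<Rightarrow> real \<Rightarrow> real" where
  "barrier_weight \<eta> \<beta> \<alpha> x0 ts x t = \<eta> * exp (-\<beta>*(t-ts)) * exp (-\<alpha> * norm (x-x0)^2)"

definition barrier_grad ::
  "real \<Rightarrow> real \<Rightarrow> real \<Rightarrow> real^'n \<Rightarrow> real \<Rightarrow> real^'n \<Rightarrow> real \<Rightarrow> real^'n" where
  "barrier_grad \<eta> \<beta> \<alpha> x0 ts x t = (2*\<alpha> * barrier_weight \<eta> \<beta> \<alpha> x0 ts x t) *\<^sub>R (x - x0)"

definition barrier_hess ::
  "real \<Rightarrow> real \<Rightarrow> real \<Rightarrow> real^'n \<Rightarrow> real \<Rightarrow> real^'n \<Rightarrow> real \<Rightarrow> real^'n^'n" where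
  "barrier_hess \<eta> \<beta> \<alpha> x0 ts x t =
     (2*\<alpha> * barrier_weight \<eta> \<beta> \<alpha> x0 ts x t) *\<^sub>R mat 1
   - (4*\<alpha>^2 * barrier_weight \<eta> \<beta> \<alpha> x0 ts x t) *\<^sub>R outer_prod (x - x0)"

definition barrier_dt ::
  "real \<Rightarrow> real \<Rightarrow> real \<Rightarrow> real \<Rightarrow> real^'n \<Rightarrow> real \<Rightarrow> real^'n \<Rightarrow> real \<Rightarrow> real" where
  "barrier_dt \<eta> \<beta> \<alpha> r x0 ts x t =
     \<beta> * \<eta> * exp (-\<beta>*(t-ts)) * (exp (-\<alpha> * norm (x-x0)^2) - exp (-\<alpha>*r^2))"

lemma test_fun_barrier:
  fixes x0 :: "real^'n"
  shows "test_fun (barrier M \<eta> \<beta> \<alpha> r x0 ts) (barrier_grad \<eta> \<beta> \<alpha> x0 ts)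
     (barrier_hess \<eta> \<beta> \<alpha> x0 ts) (barrier_dt \<eta> \<beta> \<alpha> r x0 ts)"
  unfolding test_fun_def
proof (intro conjI allI)
  show "continuous_on UNIV (\<lambda>(x, t). barrier_grad \<eta> \<beta> \<alpha> x0 ts x t)"
    and "continuous_on UNIV (\<lambda>(x, t). barrier_hess \<eta> \<beta> \<alpha> x0 ts x t)"
    and "continuous_on UNIV (\<lambda>(x, t). barrier_dt \<eta> \<beta> \<alpha> r x0 ts x t)"
    unfolding barrier_grad_def barrier_hess_def barrier_dt_def barrier_weight_def outer_prod_def
      case_prod_unfold
    by (intro continuous_intros)+
next
  fix x :: "real^'n" and t
  have norm_sq: "\<And>y. norm (y - x0) ^ 2 = (y - x0) \<bullet> (y - x0)"
    by (simp add: power2_norm_eq_inner)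
  show "((\<lambda>y. barrier M \<eta> \<beta> \<alpha> r x0 ts y t) has_derivative
          (\<lambda>h. barrier_grad \<eta> \<beta> \<alpha> x0 ts x t \<bullet> h)) (at x)"
    unfolding barrier_def barrier_grad_def barrier_weight_def norm_sq
    by (rule derivative_eq_intros refl | simp)+ (simp add: algebra_simps inner_commute)
  show "((\<lambda>y. barrier_grad \<eta> \<beta> \<alpha> x0 ts y t) has_derivative
          (\<lambda>h. barrier_hess \<eta> \<beta> \<alpha> x0 ts x t *v h)) (at x)"
    unfolding barrier_hess_def barrier_grad_def barrier_weight_def norm_sq
    by (rule derivative_eq_intros refl | simp)+
      (auto simp: matrix_vector_mult_diff_rdistrib outer_prod_mult_vec inner_commute
        power2_eq_square simp flip: scaleR_matrix_vector_assoc)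
  show "((\<lambda>s. barrier M \<eta> \<beta> \<alpha> r x0 ts x s) has_real_derivative
          barrier_dt \<eta> \<beta> \<alpha> r x0 ts x t) (at t)"
    unfolding barrier_def barrier_dt_def
    by (rule derivative_eq_intros refl | simp)+
qed

lemma continuous_on_barrier:
  "continuous_on S (\<lambda>(x,t). barrier M \<eta> \<beta> \<alpha> r x0 ts x t)"
  unfolding barrier_def case_prod_unfold by (intro continuous_intros)

lemma barrier_sphere: "x \<in> sphere x0 r \<Longrightarrow> barrier M \<eta> \<beta> \<alpha> r x0 ts x t = M"
  by (simp add: barrier_def dist_norm norm_minus_commute)

lemma barrier_initial_ge:
  assumes "0 \<le> \<alpha>" "0 \<le> \<eta>"
  shows "M - \<eta> \<le> barrier M \<eta> \<beta> \<alpha> r x0 ts x ts"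
proof -
  have "exp (-\<alpha> * norm (x-x0)^2) \<le> 1" using assms by simp
  moreover have "0 < exp (-\<alpha>*r^2)" by simp
  ultimately have "exp (-\<alpha> * norm (x-x0)^2) - exp (-\<alpha>*r^2) \<le> 1" by linarith
  from mult_left_le[OF this assms(2)] show ?thesis by (simp add: barrier_def)
qed

lemma barrier_center_less:
  assumes "0 < \<alpha>" "0 < \<eta>" "0 < r"
  shows "barrier M \<eta> \<beta> \<alpha> r x0 ts x0 t < M"
  using assms by (simp add: barrier_def)

lemma barrier_exponent_exists:
  fixes r lam K :: real
  assumes "0 < r" "0 < lam"
  obtains \<alpha> where "1 \<le> \<alpha>" "4 \<le> \<alpha>*r^2" "K \<le> lam*\<alpha>*r^2"
proof
  define \<alpha> where "\<alpha> = max 1 (max (4/r^2) (K/(lam*r^2)))"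
  show "1 \<le> \<alpha>" by (simp add: \<alpha>_def)
  have "4/r^2 \<le> \<alpha>" "K/(lam*r^2) \<le> \<alpha>" by (simp_all add: \<alpha>_def)
  then show "4 \<le> \<alpha>*r^2" "K \<le> lam*\<alpha>*r^2" using assms by (simp_all add: field_simps)
qed

text \<open>Near the lateral boundary (\<rho> \<ge> r/2) the ellipticity term -4\<lambda>\<alpha>^2\<rho>^2 dominates once \<alpha> is
  large; near the axis e^{-\<alpha>r^2} \<le> e^{-\<alpha>\<rho>^2}/2, and the time derivative (via \<beta>) dominates.\<close>
lemma barrier_inequality:
  fixes lam Lam n B C r \<rho> \<alpha> \<beta> :: real
  assumes "0 < lam" "0 \<le> Lam" "0 \<le> n" "0 \<le> B" "0 \<le> C" "0 \<le> \<rho>" "\<rho> < r"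
    and \<alpha>: "1 \<le> \<alpha>" "4 \<le> \<alpha>*r^2" "2*Lam*n + 2*B*r + C + 1 \<le> lam*\<alpha>*r^2"
    and \<beta>: "\<beta> = 2*(2*\<alpha>*Lam*n + 2*\<alpha>*B*r + C) + 1"
  shows "exp (-\<alpha>*\<rho>^2) * (2*\<alpha>*Lam*n - 4*lam*\<alpha>^2*\<rho>^2 + 2*\<alpha>*B*\<rho> + C)
           < \<beta> * (exp (-\<alpha>*\<rho>^2) - exp (-\<alpha>*r^2))"
proof -
  define E where "E = exp (-\<alpha>*\<rho>^2)"
  define E\<^sub>r where "E\<^sub>r = exp (-\<alpha>*r^2)"
  have E_pos: "0 < E" by (simp add: E_def)
  have "\<rho>^2 < r^2" using assms by (simp add: power_strict_mono)
  then have Er_le: "E\<^sub>r \<le> E" using \<alpha> by (simp add: E_def E\<^sub>r_def)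
  have "0 \<le> 2*\<alpha>*Lam*n + 2*\<alpha>*B*r + C" using assms by simp
  then have \<beta>_pos: "0 < \<beta>" using \<beta> by simp
  show ?thesis
  proof (cases "r/2 \<le> \<rho>")
    case True
    then have "(r/2)^2 \<le> \<rho>^2" using assms by (simp add: power_mono)
    then have "lam*\<alpha>^2*r^2 \<le> 4*lam*\<alpha>^2*\<rho>^2"
      using assms by (simp add: power2_eq_square)
    moreover have "\<alpha>*(2*Lam*n + 2*B*r + C + 1) \<le> lam*\<alpha>^2*r^2"
      using mult_left_mono[OF \<alpha>(3), of \<alpha>] \<alpha>(1) by (simp add: power2_eq_square mult_ac)
    moreover have "2*\<alpha>*B*\<rho> \<le> 2*\<alpha>*B*r" using assms by (simp add: mult_left_mono)
    moreover have "C \<le> \<alpha>*C" using assms by (simp add: mult_right_mono[of 1 \<alpha> C, simplified])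
    ultimately have "2*\<alpha>*Lam*n - 4*lam*\<alpha>^2*\<rho>^2 + 2*\<alpha>*B*\<rho> + C < 0"
      using \<alpha>(1) by (simp only: distrib_left; linarith)
    then have "E * (2*\<alpha>*Lam*n - 4*lam*\<alpha>^2*\<rho>^2 + 2*\<alpha>*B*\<rho> + C) < 0"
      using E_pos by (simp add: mult_pos_neg)
    moreover have "0 \<le> \<beta> * (E - E\<^sub>r)" using Er_le \<beta>_pos by simp
    ultimately show ?thesis unfolding E_def E\<^sub>r_def by linarith
  next
    case False
    define Q where "Q = 2*\<alpha>*Lam*n + 2*\<alpha>*B*r + C"
    have "2*\<alpha>*B*\<rho> \<le> 2*\<alpha>*B*r" using assms by (simp add: mult_left_mono)
    moreover have "0 \<le> 4*lam*\<alpha>^2*\<rho>^2" using assms by simp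
    ultimately have bracket_le: "2*\<alpha>*Lam*n - 4*lam*\<alpha>^2*\<rho>^2 + 2*\<alpha>*B*\<rho> + C \<le> Q"
      unfolding Q_def by linarith
    have "\<alpha>*\<rho>^2 \<le> \<alpha>*(r/2)^2"
      using False assms by (intro mult_left_mono power_mono) auto
    then have "3 \<le> \<alpha>*(r^2 - \<rho>^2)" using \<alpha>(2) by (simp add: power_divide right_diff_distrib)
    then have "exp (-\<alpha>*(r^2 - \<rho>^2)) \<le> exp (-3)" by simp
    also have "exp (-3::real) \<le> 1/2"
      using exp_ge_add_one_self[of "3::real"] by (simp add: exp_minus field_simps)
    finally have decay: "exp (-\<alpha>*(r^2 - \<rho>^2)) \<le> 1/2" .
    have "E\<^sub>r = E * exp (-\<alpha>*(r^2 - \<rho>^2))"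
      unfolding E_def E\<^sub>r_def by (simp add: algebra_simps flip: exp_add)
    then have "E\<^sub>r \<le> E/2" using mult_left_mono[OF decay, of E] E_pos by simp
    then have "\<beta> * (E/2) \<le> \<beta> * (E - E\<^sub>r)" using \<beta>_pos by simp
    moreover have "E * (2*\<alpha>*Lam*n - 4*lam*\<alpha>^2*\<rho>^2 + 2*\<alpha>*B*\<rho> + C) \<le> E * Q"
      using bracket_le E_pos by simp
    moreover have "E * Q < \<beta> * (E/2)" using E_pos \<beta> unfolding Q_def by (simp add: algebra_simps)
    ultimately show ?thesis unfolding E_def E\<^sub>r_def by linarith
  qed
qed

lemma barrier_operator_le:
  fixes F :: "('n::finite) nonlin" and x0 :: "real^'n"
  assumes S: "structure_S F lam Lam b c D" and xs: "(x,s) \<in> D" and F0: "F x s 0 0 0 = 0"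
    and \<alpha>: "0 \<le> \<alpha>" and \<eta>: "0 \<le> \<eta>"
  shows "F x s U (barrier_grad \<eta> \<beta> \<alpha> x0 ts x s) (barrier_hess \<eta> \<beta> \<alpha> x0 ts x s)
    \<le> barrier_weight \<eta> \<beta> \<alpha> x0 ts x s
         * (2*\<alpha>*Lam*CARD('n) - 4*lam*\<alpha>^2*norm (x-x0)^2 + 2*\<alpha>*b x s*norm (x-x0))
       + c x s * U"
proof -
  define w where "w = barrier_weight \<eta> \<beta> \<alpha> x0 ts x s"
  define N where "N = (4*\<alpha>^2*w) *\<^sub>R outer_prod (x - x0)"
  have w: "0 \<le> w" using \<eta> by (simp add: w_def barrier_weight_def)
  have hess_N: "barrier_hess \<eta> \<beta> \<alpha> x0 ts x s + N = (2*\<alpha>*w) *\<^sub>R mat 1"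
    by (simp add: barrier_hess_def N_def w_def)
  have hess_sym: "sym_mat (barrier_hess \<eta> \<beta> \<alpha> x0 ts x s)"
    unfolding barrier_hess_def by (intro sym_mat_diff sym_mat_scaleR sym_mat_mat sym_mat_outer_prod)
  have N_sym: "sym_mat N" and N_psd: "psd_mat N"
    unfolding N_def using w by (auto intro: sym_mat_scaleR sym_mat_outer_prod psd_mat_scaleR psd_mat_outer_prod)
  have "psd_mat (barrier_hess \<eta> \<beta> \<alpha> x0 ts x s + N)"
    unfolding hess_N using w \<alpha> by (intro psd_mat_scaleR psd_mat_mat_1) simp
  from structure_S_upper_bound[OF S xs F0 hess_sym N_sym N_psd this, unfolded hess_N]
  have "F x s U (barrier_grad \<eta> \<beta> \<alpha> x0 ts x s) (barrier_hess \<eta> \<beta> \<alpha> x0 ts x s)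
      \<le> Lam * (2*\<alpha>*w*CARD('n)) - lam * (4*\<alpha>^2*w*norm (x-x0)^2)
         + b x s * norm (barrier_grad \<eta> \<beta> \<alpha> x0 ts x s) + c x s * U"
    by (simp add: N_def trace_scaleR trace_outer_prod trace_I)
  moreover have "norm (barrier_grad \<eta> \<beta> \<alpha> x0 ts x s) = 2*\<alpha>*w*norm (x-x0)"
    using w \<alpha> by (simp add: barrier_grad_def w_def)
  ultimately show ?thesis unfolding w_def[symmetric] by (simp add: algebra_simps)
qed

lemma barrier_strict_supersolution:
  fixes F :: "('n::finite) nonlin" and x0 :: "real^'n"
  assumes S: "structure_S F lam Lam b c D" and F0: "\<forall>(x,t)\<in>D. F x t 0 0 0 = 0"
    and lam: "0 < lam" "lam \<le> Lam"
    and b_le: "\<forall>(x,t)\<in>D. \<bar>b x t\<bar> \<le> B" and c_le: "\<forall>(x,t)\<in>D. \<bar>c x t\<bar> \<le> C"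
    and c_nonpos: "\<forall>(x,t)\<in>D. c x t \<le> 0"
    and B: "0 \<le> B" and C: "0 \<le> C" and M: "0 \<le> M" and \<eta>: "0 < \<eta>"
    and \<alpha>: "1 \<le> \<alpha>" "4 \<le> \<alpha>*r^2" "2*Lam*CARD('n) + 2*B*r + C + 1 \<le> lam*\<alpha>*r^2"
    and \<beta>: "\<beta> = 2*(2*\<alpha>*Lam*CARD('n) + 2*\<alpha>*B*r + C) + 1"
    and xs: "(x,s) \<in> D" "x \<in> ball x0 r" and U: "barrier M \<eta> \<beta> \<alpha> r x0 ts x s < U"
  shows "F x s U (barrier_grad \<eta> \<beta> \<alpha> x0 ts x s) (barrier_hess \<eta> \<beta> \<alpha> x0 ts x s)
           - barrier_dt \<eta> \<beta> \<alpha> r x0 ts x s < 0"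
proof -
  define \<rho> where "\<rho> = norm (x - x0)"
  define P where "P = \<eta> * exp (-\<beta>*(s-ts))"
  define E where "E = exp (-\<alpha>*\<rho>^2)"
  have P_pos: "0 < P" using \<eta> by (simp add: P_def)
  have weight: "barrier_weight \<eta> \<beta> \<alpha> x0 ts x s = P * E"
    by (simp add: barrier_weight_def P_def E_def \<rho>_def)
  have \<rho>: "0 \<le> \<rho>" "\<rho> < r" using xs by (auto simp: \<rho>_def dist_norm norm_minus_commute)
  have c: "- C \<le> c x s" "c x s \<le> 0" using c_le c_nonpos xs(1) by auto
  have "b x s \<le> B" using b_le xs(1) by auto
  then have "2*\<alpha>*b x s*\<rho> \<le> 2*\<alpha>*B*\<rho>" using \<alpha> \<rho> by (simp add: mult_right_mono)
  moreover have "c x s * U \<le> P * E * C"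
  proof -
    have "c x s * U \<le> c x s * barrier M \<eta> \<beta> \<alpha> r x0 ts x s"
      using c U by (simp add: mult_left_mono_neg)
    also have "\<dots> = c x s * M - c x s * (P * E) + c x s * P * exp (-\<alpha>*r^2)"
      by (simp add: barrier_def P_def E_def \<rho>_def algebra_simps)
    also have "\<dots> \<le> P * E * C"
    proof -
      have "c x s * M \<le> 0" and "c x s * P * exp (-\<alpha>*r^2) \<le> 0"
        using c M P_pos by (simp_all add: mult_nonpos_nonneg)
      moreover have "- c x s * (P * E) \<le> C * (P * E)"
        using c P_pos by (intro mult_right_mono) (auto simp: E_def)
      ultimately show ?thesis by (simp add: algebra_simps)
    qed
    finally show ?thesis .
  qed
  moreover have "barrier_dt \<eta> \<beta> \<alpha> r x0 ts x s = P * (\<beta> * (E - exp (-\<alpha>*r^2)))"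
    by (simp add: barrier_dt_def P_def E_def \<rho>_def)
  moreover have "0 \<le> P * E" using P_pos by (simp add: E_def)
  moreover have "F x s U (barrier_grad \<eta> \<beta> \<alpha> x0 ts x s) (barrier_hess \<eta> \<beta> \<alpha> x0 ts x s)
      \<le> P * E * (2*\<alpha>*Lam*CARD('n) - 4*lam*\<alpha>^2*\<rho>^2 + 2*\<alpha>*b x s*\<rho>) + c x s * U"
    unfolding weight[symmetric] \<rho>_def
    by (rule barrier_operator_le[OF S xs(1)]) (use F0 xs(1) \<alpha> \<eta> in auto)
  ultimately have "F x s U (barrier_grad \<eta> \<beta> \<alpha> x0 ts x s) (barrier_hess \<eta> \<beta> \<alpha> x0 ts x s)
        - barrier_dt \<eta> \<beta> \<alpha> r x0 ts x s
      \<le> P * (E * (2*\<alpha>*Lam*CARD('n) - 4*lam*\<alpha>^2*\<rho>^2 + 2*\<alpha>*B*\<rho> + C)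
             - \<beta> * (E - exp (-\<alpha>*r^2)))"
    using mult_left_mono[of "2*\<alpha>*b x s*\<rho>" "2*\<alpha>*B*\<rho>" "P * E"] by (simp add: algebra_simps)
  also have "\<dots> < 0"
    using barrier_inequality[OF lam(1) _ _ B C \<rho> \<alpha> \<beta>] lam P_pos
    by (simp add: E_def mult_pos_neg)
  finally show ?thesis .
qed

section \<open>Comparison with a strict supersolution\<close>

lemma visc_sub_le_strict_super_test_fun:
  fixes F :: "('n::finite) nonlin" and u phi :: "real^'n \<Rightarrow> real \<Rightarrow> real" and x0 :: "real^'n"
  assumes sub: "visc_sub F D u" and test: "test_fun phi Dphi D2phi phit"
    and phi_cont: "continuous_on UNIV (\<lambda>(x,s). phi x s)"
    and strict: "\<And>x s U. (x,s) \<in> D \<Longrightarrow> x \<in> ball x0 r \<Longrightarrow> phi x s < U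
                   \<Longrightarrow> F x s U (Dphi x s) (D2phi x s) - phit x s < 0"
    and cyl_D: "cball x0 r \<times> {t..T} \<subseteq> D" and past: "\<forall>(x,s)\<in>D. s \<le> T"
    and u_cont: "continuous_on D (\<lambda>(x,s). u x s)"
    and bottom: "\<And>x. x \<in> cball x0 r \<Longrightarrow> u x t \<le> phi x t"
    and lateral: "\<And>x s. x \<in> sphere x0 r \<Longrightarrow> t \<le> s \<Longrightarrow> s \<le> T \<Longrightarrow> u x s \<le> phi x s"
    and xs: "(x,s) \<in> cball x0 r \<times> {t..T}"
  shows "u x s \<le> phi x s"
proof -
  define w where "w = (\<lambda>(x,s). u x s - phi x s)"
  have "continuous_on (cball x0 r \<times> {t..T}) w"
    unfolding w_def case_prod_unfold using continuous_on_subset[OF u_cont cyl_D] phi_cont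
    by (intro continuous_intros) (auto simp: case_prod_unfold elim: continuous_on_subset)
  then obtain xh th where max_in: "(xh,th) \<in> cball x0 r \<times> {t..T}"
    and max: "\<forall>z\<in>cball x0 r \<times> {t..T}. w z \<le> w (xh,th)"
    using continuous_attains_sup[of "cball x0 r \<times> {t..T}" w] xs
    by (metis compact_Times compact_cball compact_Icc empty_iff surj_pair)
  have "w (xh,th) \<le> 0"
  proof (rule ccontr)
    assume pos: "\<not> w (xh,th) \<le> 0"
    then have "th \<noteq> t" and "xh \<notin> sphere x0 r"
      using bottom lateral max_in by (auto simp: w_def)
    with max_in have xh: "xh \<in> ball x0 r" and th: "t < th" by auto
    txt \<open>Points of D near (xh,th) are later than t and, by past, not later than T; so even
      on the top of the cylinder the maximum is a local maximum relative to D.\<close>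
    have "loc_max_rel D (\<lambda>y s. u y s - phi y s) xh th"
      unfolding loc_max_rel_def
    proof (intro exI[of _ "min (r - dist x0 xh) (th - t)"] conjI allI impI)
      show "0 < min (r - dist x0 xh) (th - t)" using xh th by simp
      fix y s assume "(y,s) \<in> D" and "dist y xh < min (r - dist x0 xh) (th - t)"
        and "\<bar>s - th\<bar> < min (r - dist x0 xh) (th - t)"
      then have "(y,s) \<in> cball x0 r \<times> {t..T}"
        using past dist_triangle[of x0 y xh] by (auto simp: dist_commute abs_less_iff)
      then show "u y s - phi y s \<le> u xh th - phi xh th" using max by (auto simp: w_def)
    qed
    then have "0 \<le> F xh th (u xh th) (Dphi xh th) (D2phi xh th) - phit xh th"
      using sub test cyl_D max_in unfolding visc_sub_def by blast
    moreover have "phi xh th < u xh th" using pos by (simp add: w_def)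
    ultimately show False using strict[of xh th] cyl_D max_in xh by fastforce
  qed
  moreover have "w (x,s) \<le> w (xh,th)" using max xs by blast
  ultimately show ?thesis by (simp add: w_def)
qed

section \<open>The maximum propagates down the axis\<close>

lemma mem_cyl_Un_upper_base:
  "t1 < t2 \<Longrightarrow> (x,s) \<in> cyl x0 R t1 t2 \<union> upper_base x0 R t2 \<longleftrightarrow> dist x x0 < R \<and> t1 < s \<and> s \<le> t2"
  by (auto simp: cyl_def upper_base_def)

lemma continuous_on_slice_less:
  fixes u :: "'a::metric_space \<Rightarrow> 'b::metric_space \<Rightarrow> real"
  assumes u: "continuous_on D (\<lambda>(x,t). u x t)" and "(x0,t) \<in> D" and "u x0 t < L"
  obtains \<delta> where "0 < \<delta>" "\<And>x. (x,t) \<in> D \<Longrightarrow> dist x x0 < \<delta> \<Longrightarrow> u x t < L"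
proof -
  obtain \<delta> where "0 < \<delta>" and \<delta>: "\<forall>z\<in>D. dist z (x0,t) < \<delta> \<longrightarrow>
      dist ((\<lambda>(x,t). u x t) z) ((\<lambda>(x,t). u x t) (x0,t)) < L - u x0 t"
    using u assms(2,3) unfolding continuous_on_iff by (metis diff_gt_0_iff_gt)
  moreover have "u x t < L" if "(x,t) \<in> D" "dist x x0 < \<delta>" for x
    using \<delta> that by (fastforce simp: dist_Pair_Pair dist_real_def abs_less_iff)
  ultimately show thesis using that by blast
qed

lemma bounded_case_prod_abs_le:
  fixes f :: "'a \<Rightarrow> 'b \<Rightarrow> real"
  assumes "bounded ((\<lambda>(x,t). f x t) ` D)"
  obtains B where "0 \<le> B" "\<forall>(x,t)\<in>D. \<bar>f x t\<bar> \<le> B"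
proof -
  obtain B where "0 < B" "\<forall>z\<in>(\<lambda>(x,t). f x t) ` D. norm z \<le> B"
    using assms bounded_pos by blast
  then show thesis using that[of B] by fastforce
qed

lemma visc_sub_eq_max_on_axis:
  fixes F :: "('n::finite) nonlin" and b c u :: "real^'n \<Rightarrow> real \<Rightarrow> real" and x0 :: "real^'n"
  assumes D_def: "D = cyl x0 R t1 t2 \<union> upper_base x0 R t2"
    and lam: "0 < lam" "lam \<le> Lam" and S: "structure_S F lam Lam b c D"
    and b_bdd: "bounded ((\<lambda>(x,t). b x t) ` D)" and c_bdd: "bounded ((\<lambda>(x,t). c x t) ` D)"
    and c_nonpos: "\<forall>(x,t)\<in>D. c x t \<le> 0" and F0: "\<forall>(x,t)\<in>D. F x t 0 0 0 = 0"
    and u_cont: "continuous_on D (\<lambda>(x,t). u x t)"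
    and sub: "visc_sub F D u" and le: "\<forall>(x,t)\<in>D. u x t \<le> M" and M: "0 \<le> M"
    and top: "(x0,t2) \<in> D" and uM: "u x0 t2 = M" and t: "t1 < t" "t < t2"
  shows "u x0 t = M"
proof (rule ccontr)
  assume "u x0 t \<noteq> M"
  have D_iff: "(x,s) \<in> D \<longleftrightarrow> dist x x0 < R \<and> t1 < s \<and> s \<le> t2" for x s
    using mem_cyl_Un_upper_base[of t1 t2] t unfolding D_def by simp
  have "(x0,t) \<in> D" using top t by (simp add: D_iff)
  with le \<open>u x0 t \<noteq> M\<close> have "u x0 t < M" by fastforce
  define \<eta> where "\<eta> = (M - u x0 t) / 2"
  have \<eta>: "0 < \<eta>" and "u x0 t < M - \<eta>" using \<open>u x0 t < M\<close> by (simp_all add: \<eta>_def field_simps)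
  then obtain \<delta> where \<delta>: "0 < \<delta>" "\<And>x. (x,t) \<in> D \<Longrightarrow> dist x x0 < \<delta> \<Longrightarrow> u x t < M - \<eta>"
    using continuous_on_slice_less[OF u_cont \<open>(x0,t) \<in> D\<close>] by blast
  define r where "r = min (\<delta>/2) (R/2)"
  have r: "0 < r" "r < R" "r < \<delta>" using \<delta> top by (auto simp: r_def D_iff)
  obtain B where B: "0 \<le> B" "\<forall>(x,t)\<in>D. \<bar>b x t\<bar> \<le> B"
    using bounded_case_prod_abs_le[OF b_bdd] .
  obtain C where C: "0 \<le> C" "\<forall>(x,t)\<in>D. \<bar>c x t\<bar> \<le> C"
    using bounded_case_prod_abs_le[OF c_bdd] .
  obtain \<alpha> where \<alpha>: "1 \<le> \<alpha>" "4 \<le> \<alpha>*r^2" "2*Lam*CARD('n) + 2*B*r + C + 1 \<le> lam*\<alpha>*r^2"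
    using barrier_exponent_exists[OF r(1) lam(1)] .
  define \<beta> where "\<beta> = 2*(2*\<alpha>*Lam*CARD('n) + 2*\<alpha>*B*r + C) + 1"
  define \<phi> where "\<phi> = barrier M \<eta> \<beta> \<alpha> r x0 t"
  have test: "test_fun \<phi> (barrier_grad \<eta> \<beta> \<alpha> x0 t) (barrier_hess \<eta> \<beta> \<alpha> x0 t) (barrier_dt \<eta> \<beta> \<alpha> r x0 t)"
    unfolding \<phi>_def by (rule test_fun_barrier)
  have "u x0 t2 \<le> \<phi> x0 t2"
  proof (rule visc_sub_le_strict_super_test_fun[OF sub test])
    show "continuous_on UNIV (\<lambda>(x,s). \<phi> x s)" unfolding \<phi>_def by (rule continuous_on_barrier)
    show "cball x0 r \<times> {t..t2} \<subseteq> D" using r t by (auto simp: D_iff dist_commute)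
    show "u x t \<le> \<phi> x t" if "x \<in> cball x0 r" for x
      using \<delta>(2)[of x] that barrier_initial_ge[of \<alpha> \<eta> M \<beta> r x0 t x] \<alpha> \<eta> r t
      by (simp add: \<phi>_def D_iff dist_commute)
    show "u x s \<le> \<phi> x s" if "x \<in> sphere x0 r" "t \<le> s" "s \<le> t2" for x s
      using that le r t by (auto simp: \<phi>_def barrier_sphere D_iff dist_commute)
    show "F x s U (barrier_grad \<eta> \<beta> \<alpha> x0 t x s) (barrier_hess \<eta> \<beta> \<alpha> x0 t x s)
        - barrier_dt \<eta> \<beta> \<alpha> r x0 t x s < 0"
      if "(x,s) \<in> D" "x \<in> ball x0 r" "\<phi> x s < U" for x s U
      using that(3) unfolding \<phi>_def
      by (rule barrier_strict_supersolution[OF S F0 lam B(2) C(2) c_nonpos B(1) C(1) M \<eta> \<alpha> \<beta>_def that(1,2)])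
    show "(x0,t2) \<in> cball x0 r \<times> {t..t2}" using r t by simp
  qed (use u_cont in \<open>auto simp: D_iff\<close>)
  moreover have "\<phi> x0 t2 < M" using \<eta> \<alpha> r by (simp add: \<phi>_def barrier_center_less)
  ultimately show False using uM by simp
qed

theorem lemma3p2:
  fixes F :: "('n::finite) nonlin"
    and b c :: "real^'n \<Rightarrow> real \<Rightarrow> real"
    and u :: "real^'n \<Rightarrow> real \<Rightarrow> real"
    and x0 :: "real^'n"
    and lam Lam R t1 t2 M :: real
  defines "D \<equiv> cyl x0 R t1 t2 \<union> upper_base x0 R t2"
  assumes lam_pos: "0 < lam" and lam_le: "lam \<le> Lam"
    and S: "structure_S F lam Lam b c D"
    and b_cont: "continuous_on D (\<lambda>(x,t). b x t)" and b_bdd: "bounded ((\<lambda>(x,t). b x t) ` D)"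
    and b_nonneg: "\<forall>(x,t)\<in>D. 0 \<le> b x t"
    and c_cont: "continuous_on D (\<lambda>(x,t). c x t)" and c_bdd: "bounded ((\<lambda>(x,t). c x t) ` D)"
    and c_nonpos: "\<forall>(x,t)\<in>D. c x t \<le> 0"
    and F0: "\<forall>(x,t)\<in>D. F x t 0 0 0 = 0"
    and u_cont: "continuous_on D (\<lambda>(x,t). u x t)"
    and top: "(x0, t2) \<in> D" and uM: "u x0 t2 = M"
  shows "(visc_sub F D u \<and> (\<forall>(x,t)\<in>D. u x t \<le> M) \<and> 0 \<le> M
            \<longrightarrow> (\<forall>t. t1 < t \<and> t < t2 \<longrightarrow> u x0 t = M))
       \<and> (visc_super F D u \<and> (\<forall>(x,t)\<in>D. M \<le> u x t) \<and> M \<le> 0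
            \<longrightarrow> (\<forall>t. t1 < t \<and> t < t2 \<longrightarrow> u x0 t = M))"
proof -
  note axis = visc_sub_eq_max_on_axis[OF D_def[THEN meta_eq_to_obj_eq] lam_pos lam_le _ b_bdd c_bdd c_nonpos]
  show ?thesis
  proof (intro conjI impI allI, goal_cases sub super)
    case (sub t)
    then show ?case using axis[OF S F0 u_cont] top uM by blast
  next
    case (super t)
    have "continuous_on D (\<lambda>(x,t). - u x t)"
      using continuous_on_minus[OF u_cont] by (simp add: case_prod_unfold)
    moreover have "\<forall>(x,t)\<in>D. neg_nonlin F x t 0 0 0 = 0" using F0 by (simp add: neg_nonlin_def)
    moreover have "visc_sub (neg_nonlin F) D (\<lambda>x t. - u x t)"
      using super visc_super_imp_visc_sub_neg by blast
    moreover have "\<forall>(x,t)\<in>D. - u x t \<le> - M" using super by auto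
    ultimately have "- u x0 t = - M"
      using axis[OF structure_S_neg_nonlin[OF S], where u = "\<lambda>x t. - u x t" and M = "- M"]
        super top uM by auto
    then show ?case by simp
  qed
qed

end
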